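(* Let $w=\mathcal C_n(v_0,\dots,v_{k_n-1})$ and $w'=\mathcal C_n(v'_0,\dots,v'_{k_n-1})$ be in $\mathcal W^c_{n+1}$, with $w$ sitting on $[0,q_{n+1})$ and $\mathrm{rev}(w')$ placed on $[j_1,q_{n+1}+j_1)$, where $j_1\in[0,q_n)$, $j_1\equiv p_n^{-1}\pmod{q_n}$. Then: (1) each occurrence of an $n$-subword $v_i$ of $w$ (a copy of $v_i$ in a power $v_i^{l_n-1}$) is either lined up with an occurrence of $\mathrm{rev}(v'_{k_n-i-1})$ in the placed $\mathrm{rev}(w')$, or lies entirely opposite positions of the boundary of the placed $\mathrm{rev}(w')$ (positions not belonging to any of its reversed $n$-subwords); (2) there is a number $C$ such that for every $i<k_n$, the number of occurrences of $v_i$ in $w$ lined up with an occurrence of $\mathrm{rev}(v'_{k_n-i-1})$ is exactly $C$.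
   Context: Circular coefficients $\langle k_n,l_n\rangle$: $k_n\ge2$, $l_n\ge2$, $p_0=0,q_0=1$, $q_{n+1}=k_nl_nq_n^2$, $p_{n+1}=p_nq_nk_nl_n+1$. $\mathcal C_n(w_0,\dots,w_{k_n-1})=\prod_{i=0}^{q_n-1}\prod_{j=0}^{k_n-1}(b^{q_n-j_i}w_j^{l_n-1}e^{j_i})$ (concatenation) with $j_i\in[0,q_n)$, $j_i\equiv p_n^{-1}i\pmod{q_n}$ ($j_i=0$ if $q_n=1$). $\mathcal W^c_n$ is a set of words of length $q_n$ over $\Sigma\cup\{b,e\}$ and $\mathcal W^c_{n+1}$ consists of words $\mathcal C_n(w_0,\dots,w_{k_n-1})$, $w_j\in\mathcal W^c_n$. $\mathrm{rev}(w)$ is $w$ written backwards; the boundary of $\mathcal C_n(\dots)$ consists of the letters in the displayed blocks $b^{q_n-j_i}$, $e^{j_i}$. *)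

theory Defs
  imports "HOL-Number_Theory.Cong"
begin

datatype 'a letter = Sym 'a | Bl | El

fun qq :: "(nat \<Rightarrow> nat) \<Rightarrow> (nat \<Rightarrow> nat) \<Rightarrow> nat \<Rightarrow> nat" where
  "qq k l 0 = 1"
| "qq k l (Suc n) = k n * l n * (qq k l n)^2"

fun pp :: "(nat \<Rightarrow> nat) \<Rightarrow> (nat \<Rightarrow> nat) \<Rightarrow> nat \<Rightarrow> nat" where
  "pp k l 0 = 0"
| "pp k l (Suc n) = pp k l n * qq k l n * k n * l n + 1"

definition jidx :: "(nat \<Rightarrow> nat) \<Rightarrow> (nat \<Rightarrow> nat) \<Rightarrow> nat \<Rightarrow> nat \<Rightarrow> nat" where
  "jidx k l n i = (THE j. j < qq k l n \<and> [pp k l n * j = i] (mod qq k l n))"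

definition cblock :: "(nat \<Rightarrow> nat) \<Rightarrow> (nat \<Rightarrow> nat) \<Rightarrow> nat \<Rightarrow> (nat \<Rightarrow> 'a letter list) \<Rightarrow> nat \<Rightarrow> nat \<Rightarrow> 'a letter list" where
  "cblock k l n w i j =
     replicate (qq k l n - jidx k l n i) Bl @ concat (replicate (l n - 1) (w j)) @ replicate (jidx k l n i) El"

definition Cop :: "(nat \<Rightarrow> nat) \<Rightarrow> (nat \<Rightarrow> nat) \<Rightarrow> nat \<Rightarrow> (nat \<Rightarrow> 'a letter list) \<Rightarrow> 'a letter list" where
  "Cop k l n w = concat (map (\<lambda>i. concat (map (\<lambda>j. cblock k l n w i j) [0..<k n])) [0..<qq k l n])"

fun Wc :: "(nat \<Rightarrow> nat) \<Rightarrow> (nat \<Rightarrow> nat) \<Rightarrow> 'a letter list set \<Rightarrow> nat \<Rightarrow> 'a letter list set" where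
  "Wc k l W0 0 = W0"
| "Wc k l W0 (Suc n) = {Cop k l n w | w. \<forall>j<k n. w j \<in> Wc k l W0 n}"

text \<open>Start position (in C_n(w_0,...) sitting on [0,q_{n+1})) of the t-th copy (t < l_n - 1)
  of w_j inside the block with outer index i (i < q_n). Each block has length l_n q_n.\<close>
definition occ_start :: "(nat \<Rightarrow> nat) \<Rightarrow> (nat \<Rightarrow> nat) \<Rightarrow> nat \<Rightarrow> nat \<Rightarrow> nat \<Rightarrow> nat \<Rightarrow> nat" where
  "occ_start k l n j i t =
     (i * k n + j) * (l n * qq k l n) + (qq k l n - jidx k l n i) + t * qq k l n"

definition occs :: "(nat \<Rightarrow> nat) \<Rightarrow> (nat \<Rightarrow> nat) \<Rightarrow> nat \<Rightarrow> nat \<Rightarrow> nat set" where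
  "occs k l n j = {occ_start k l n j i t | i t. i < qq k l n \<and> t < l n - 1}"

text \<open>Start positions of the occurrences of rev(w'_j) in rev(C_n(w'_0,...)) placed on
  [d, q_{n+1} + d): an occurrence of w'_j at [s, s+q_n) in w' becomes an occurrence of
  rev(w'_j) at [q_{n+1} - s - q_n, q_{n+1} - s) in rev(w'), shifted by d.\<close>
definition rev_occs :: "(nat \<Rightarrow> nat) \<Rightarrow> (nat \<Rightarrow> nat) \<Rightarrow> nat \<Rightarrow> nat \<Rightarrow> nat \<Rightarrow> nat set" where
  "rev_occs k l n d j = {d + qq k l (Suc n) - s - qq k l n | s. s \<in> occs k l n j}"

definition rev_boundary :: "(nat \<Rightarrow> nat) \<Rightarrow> (nat \<Rightarrow> nat) \<Rightarrow> nat \<Rightarrow> nat \<Rightarrow> nat set" where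
  "rev_boundary k l n d = {x. d \<le> x \<and> x < qq k l (Suc n) + d \<and>
      (\<forall>j<k n. \<forall>r\<in>rev_occs k l n d j. \<not> (r \<le> x \<and> x < r + qq k l n))}"

end

theory Submission
  imports Defs
begin

text \<open>Write Q = q_n, K = k_n, T = l_n q_n and d = j_1. The word w is a concatenation of QK
  blocks of length T, and the copy of v_j with outer index i and copy index t starts at
  (iK + j)T + Q - j_i + tQ. Reversal sends a copy of v'_j' starting at s' to a copy of rev(v'_j')
  starting at r = d + q_(n+1) - s' - Q, so how it meets the copy starting at s is governed by
  s + s'. As i \<mapsto> j_i is additive modulo Q, when r lies in the block of s we get r \<equiv> s (mod Q),
  so the two copies coincide or are disjoint; otherwise they are separated by block boundaries,
  the neighbouring-block case needing j_i + j_i' + d \<le> 2Q. Shifting by jT carries the copies of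
  v_0 and rev(v'_(K-1)) onto those of v_j and rev(v'_(K-1-j)), so the number of aligned copies
  does not depend on j.\<close>

lemma cong_imp_le_add_modulus:
  fixes x y m :: nat
  assumes "[x = y] (mod m)" and "x < 2 * m" and "y < m"
  shows "x \<le> m + y"
proof -
  have "x mod m = y"
    using assms(1,3) by (simp add: cong_def)
  then have "x = x div m * m + y"
    using div_mult_mod_eq[of x m] by simp
  moreover have "x div m < 2"
    using assms(2) by (rule less_mult_imp_div_less)
  then have "x div m * m \<le> 1 * m"
    by (intro mult_le_mono1) simp
  ultimately show ?thesis
    by linarith
qed

lemma cong_neq_imp_add_modulus_le:
  fixes a b m :: nat
  assumes "[a = b] (mod m)" and "a \<noteq> b"
  shows "a + m \<le> b \<or> b + m \<le> a"
proof -
  have "x + m \<le> y" if "x < y" and "[y = x] (mod m)" for x y :: nat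
  proof -
    have "m dvd y - x"
      using that by (simp add: cong_altdef_nat)
    then have "m \<le> y - x"
      using that(1) by (simp add: dvd_imp_le)
    then show ?thesis
      using that(1) by linarith
  qed
  with assms show ?thesis
    by (metis cong_sym linorder_neqE_nat)
qed

lemma mult_add_Suc_eq_multD:
  fixes a b c K :: nat
  assumes "b + 1 < 2 * K" and "a * K + b + 1 = c * K"
  shows "a + 1 = c \<and> b + 1 = K"
proof -
  have "c * K < (a + 2) * K"
    using assms by (simp add: algebra_simps)
  then have "c < a + 2"
    using mult_less_cancel2 by blast
  moreover have "a * K < c * K"
    using assms(2) by linarith
  then have "a < c"
    using mult_less_cancel2 by blast
  ultimately have "c = a + 1"
    by linarith
  with assms(2) show ?thesis
    by (simp add: algebra_simps)
qed

lemma mult_add_eq_multD: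
  fixes a b c K :: nat
  assumes "b + 1 < 2 * K" and "a * K + b = c * K"
  shows "a + 1 = c \<or> a = c"
proof -
  have "c * K < (a + 2) * K"
    using assms by (simp add: algebra_simps)
  then have "c < a + 2"
    using mult_less_cancel2 by blast
  moreover have "a * K \<le> c * K"
    using assms(2) by linarith
  then have "a \<le> c"
    using assms(1) by simp
  ultimately show ?thesis
    by linarith
qed

lemma coprime_pp_qq: "coprime (pp k l n) (qq k l n)"
proof (induction n)
  case 0
  then show ?case by simp
next
  case (Suc n)
  define a where "a = pp k l n * qq k l n * k n * l n"
  have "coprime (a + 1) (a ^ 2)"
    by simp
  moreover have "qq k l (Suc n) dvd a ^ 2"
    by (simp add: a_def power2_eq_square ac_simps)
  ultimately show ?case
    by (simp add: a_def coprime_divisors)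
qed

lemma qq_pos:
  assumes "\<And>m. 0 < k m" and "\<And>m. 0 < l m"
  shows "0 < qq k l n"
  by (induction n) (simp_all add: assms)

lemma qq_Suc_eq: "qq k l (Suc n) = qq k l n * k n * (l n * qq k l n)"
  by (simp add: power2_eq_square)

lemma jidx_unique:
  assumes "j < qq k l n" and "[pp k l n * j = i] (mod qq k l n)"
  shows "jidx k l n i = j"
  unfolding jidx_def
proof (rule the_equality)
  fix j' assume j': "j' < qq k l n \<and> [pp k l n * j' = i] (mod qq k l n)"
  then have "[pp k l n * j' = pp k l n * j] (mod qq k l n)"
    using assms(2) cong_sym cong_trans by blast
  then have "[j' = j] (mod qq k l n)"
    using cong_mult_lcancel_nat coprime_pp_qq by blast
  then show "j' = j"
    using j' assms(1) cong_less_modulus_unique_nat by blast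
qed (use assms in simp)

lemma jidx_spec:
  assumes "0 < qq k l n"
  shows "jidx k l n i < qq k l n \<and> [pp k l n * jidx k l n i = i] (mod qq k l n)"
proof -
  obtain x where x: "[pp k l n * x = Suc 0] (mod qq k l n)"
    using cong_solve_coprime_nat coprime_pp_qq by blast
  define j where "j = i * x mod qq k l n"
  have "[pp k l n * j = i * (pp k l n * x)] (mod qq k l n)"
    by (simp add: j_def cong_def mod_mult_right_eq ac_simps)
  also have "[i * (pp k l n * x) = i * 1] (mod qq k l n)"
    using cong_scalar_left[OF x, of i] by simp
  finally have "[pp k l n * j = i] (mod qq k l n)"
    by simp
  have "j < qq k l n"
    using assms by (simp add: j_def)
  then have "jidx k l n i = j"
    using \<open>[pp k l n * j = i] (mod qq k l n)\<close> by (rule jidx_unique)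
  with \<open>j < qq k l n\<close> \<open>[pp k l n * j = i] (mod qq k l n)\<close> show ?thesis
    by simp
qed

lemma jidx_less: "0 < qq k l n \<Longrightarrow> jidx k l n i < qq k l n"
  using jidx_spec by blast

lemma cong_pp_jidx: "0 < qq k l n \<Longrightarrow> [pp k l n * jidx k l n i = i] (mod qq k l n)"
  using jidx_spec by blast

lemma jidx_eq_0_if_dvd:
  assumes "0 < qq k l n" and "qq k l n dvd i"
  shows "jidx k l n i = 0"
  using assms by (intro jidx_unique) (simp_all add: cong_def)

lemma jidx_add:
  assumes "0 < qq k l n"
  shows "[jidx k l n a + jidx k l n b = jidx k l n (a + b)] (mod qq k l n)"
proof -
  have "[pp k l n * (jidx k l n a + jidx k l n b) = a + b] (mod qq k l n)"
    using cong_pp_jidx[OF assms] by (simp add: add_mult_distrib2 cong_add)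
  also have "[a + b = pp k l n * jidx k l n (a + b)] (mod qq k l n)"
    using cong_pp_jidx[OF assms] by (rule cong_sym)
  finally show ?thesis
    using cong_mult_lcancel_nat coprime_pp_qq by blast
qed

lemma jidx_add_le:
  assumes "0 < qq k l n"
  shows "jidx k l n a + jidx k l n b \<le> qq k l n + jidx k l n (a + b)"
proof (rule cong_imp_le_add_modulus[OF jidx_add[OF assms]])
  show "jidx k l n a + jidx k l n b < 2 * qq k l n"
    using jidx_less[OF assms, of a] jidx_less[OF assms, of b] by simp
qed (rule jidx_less[OF assms])

lemma jidx_add_jidx_1_cong_0:
  assumes Q: "0 < qq k l n" and "a + b + 1 = qq k l n"
  shows "[jidx k l n a + jidx k l n b + jidx k l n 1 = 0] (mod qq k l n)"
proof -
  have "[jidx k l n a + jidx k l n b + jidx k l n 1 = jidx k l n (a + b) + jidx k l n 1] (mod qq k l n)"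
    by (rule cong_add[OF jidx_add[OF Q] cong_refl])
  also have "[jidx k l n (a + b) + jidx k l n 1 = jidx k l n (a + b + 1)] (mod qq k l n)"
    by (rule jidx_add[OF Q])
  also have "jidx k l n (a + b + 1) = 0"
    using assms by (simp add: jidx_eq_0_if_dvd)
  finally show ?thesis .
qed

lemma jidx_add_jidx_1_le:
  assumes Q: "0 < qq k l n" and "a + b + 1 = qq k l n \<or> a + b = qq k l n"
  shows "jidx k l n a + jidx k l n b + jidx k l n 1 \<le> 2 * qq k l n"
  using assms(2)
proof
  assume "a + b + 1 = qq k l n"
  then have "jidx k l n (a + b) + jidx k l n 1 \<le> qq k l n"
    using jidx_add_le[OF Q, of "a + b" 1] jidx_eq_0_if_dvd[OF Q] by simp
  then show ?thesis
    using jidx_add_le[OF Q, of a b] by simp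
next
  assume "a + b = qq k l n"
  then have "jidx k l n a + jidx k l n b \<le> qq k l n"
    using jidx_add_le[OF Q, of a b] jidx_eq_0_if_dvd[OF Q] by simp
  then show ?thesis
    using jidx_less[OF Q, of 1] by simp
qed

lemma occ_start_shift:
  "occ_start k l n j i t = j * (l n * qq k l n) + occ_start k l n 0 i t"
  by (simp add: occ_start_def algebra_simps)

lemma occs_shift: "occs k l n j = (+) (j * (l n * qq k l n)) ` occs k l n 0"
  unfolding occs_def by (subst occ_start_shift) blast

lemma occs_cases:
  assumes "s \<in> occs k l n j"
  obtains i t where "i < qq k l n" and "t + 2 \<le> l n" and "s = occ_start k l n j i t"
proof -
  obtain i t where "i < qq k l n" and "t < l n - 1" and "s = occ_start k l n j i t"
    using assms unfolding occs_def by blast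
  moreover have "t + 2 \<le> l n"
    using \<open>t < l n - 1\<close> by linarith
  ultimately show thesis
    using that by blast
qed

lemma occ_end_le:
  assumes "j < k n" and "s \<in> occs k l n j"
  shows "s + qq k l n \<le> qq k l (Suc n)"
proof -
  obtain i t where i: "i < qq k l n" and t: "t + 2 \<le> l n" and s: "s = occ_start k l n j i t"
    using assms(2) by (rule occs_cases)
  let ?Q = "qq k l n" and ?T = "l n * qq k l n"
  have "(t + 2) * ?Q \<le> ?T"
    using t by (rule mult_le_mono1)
  then have "s + ?Q \<le> (i * k n + j) * ?T + ?T"
    using s by (simp add: occ_start_def algebra_simps)
  also have "\<dots> = (i * k n + j + 1) * ?T"
    by simp
  also have "\<dots> \<le> (?Q * k n) * ?T"
  proof (rule mult_le_mono1)
    have "i * k n + j + 1 \<le> (i + 1) * k n"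
      using assms(1) by simp
    also have "\<dots> \<le> ?Q * k n"
      using i by (intro mult_le_mono1) simp
    finally show "i * k n + j + 1 \<le> ?Q * k n" .
  qed
  finally show ?thesis
    by (simp only: qq_Suc_eq)
qed

lemma qq_le_occ:
  assumes "0 < qq k l n" and "j < k n" and "s \<in> occs k l n j"
  shows "qq k l n \<le> s"
proof -
  obtain i t where i: "i < qq k l n" and t: "t + 2 \<le> l n" and s: "s = occ_start k l n j i t"
    using assms(3) by (rule occs_cases)
  show ?thesis
  proof (cases "i = 0")
    case True
    then show ?thesis
      using s assms(1) by (simp add: occ_start_def jidx_eq_0_if_dvd)
  next
    case False
    then have "1 \<le> i * k n + j"
      using assms(2) by (simp add: Suc_le_eq)
    then have "1 * (l n * qq k l n) \<le> (i * k n + j) * (l n * qq k l n)"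
      by (rule mult_le_mono1)
    moreover have "qq k l n \<le> l n * qq k l n"
      using t by simp
    ultimately show ?thesis
      unfolding s occ_start_def by linarith
  qed
qed

lemma occ_start_add_jidx:
  assumes "0 < qq k l n"
  shows "occ_start k l n j i t + jidx k l n i = (i * k n + j) * (l n * qq k l n) + (t + 1) * qq k l n"
  using jidx_less[OF assms, of i] by (simp add: occ_start_def algebra_simps)

lemma occ_start_sum:
  assumes "0 < qq k l n"
  shows "occ_start k l n j i t + occ_start k l n j' i' t' + (jidx k l n i + jidx k l n i')
    = ((i + i') * k n + (j + j')) * (l n * qq k l n) + (t + t' + 2) * qq k l n"
  using occ_start_add_jidx[OF assms, of j i t] occ_start_add_jidx[OF assms, of j' i' t']
  by (simp add: algebra_simps)

text \<open>For r = d + q_(n+1) - s' - Q, the start of the reversed copy of the occurrence at s', the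
  conclusions of the next two lemmas say s + Q \<le> r or r + Q \<le> s, and r \<equiv> s (mod Q). The
  number u + 1 - QK below is the block index of s minus that of r.\<close>

lemma occ_starts_separated:
  assumes Q: "0 < qq k l n" and j: "j < k n" and j': "j' < k n"
    and t: "t + 2 \<le> l n" and t': "t' + 2 \<le> l n"
    and other_block: "(i + i') * k n + (j + j') + 1 \<noteq> qq k l n * k n"
  shows "occ_start k l n j i t + occ_start k l n j' i' t' + 2 * qq k l n \<le> jidx k l n 1 + qq k l (Suc n)
    \<or> jidx k l n 1 + qq k l (Suc n) \<le> occ_start k l n j i t + occ_start k l n j' i' t'"
proof -
  let ?Q = "qq k l n" and ?K = "k n" and ?T = "l n * qq k l n" and ?J = "jidx k l n"
    and ?d = "jidx k l n 1" and ?N = "qq k l (Suc n)"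
    and ?s = "occ_start k l n j i t" and ?s' = "occ_start k l n j' i' t'"
  define u where "u = (i + i') * ?K + (j + j')"
  define Y where "Y = ?J i + ?J i'"
  have sum: "?s + ?s' + Y = u * ?T + (t + t' + 2) * ?Q"
    unfolding u_def Y_def by (rule occ_start_sum[OF Q])
  have "(t + t' + 4) * ?Q \<le> (2 * l n) * ?Q"
    using t t' by (intro mult_le_mono1) simp
  then have tt: "(t + t' + 2) * ?Q + 2 * ?Q \<le> 2 * ?T"
    by (simp add: algebra_simps)
  have two_Q: "2 * ?Q \<le> (t + t' + 2) * ?Q"
    by (intro mult_le_mono1) simp
  have N: "?N = (?Q * ?K) * ?T"
    by (simp only: qq_Suc_eq)
  consider (later_block) "u + 2 \<le> ?Q * ?K" | (previous_block) "u = ?Q * ?K"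
    | (earlier_block) "?Q * ?K + 1 \<le> u"
    using other_block unfolding u_def by linarith
  then show ?thesis
  proof cases
    case later_block
    then have "u * ?T + 2 * ?T \<le> ?N"
      unfolding N add_mult_distrib[symmetric] by (rule mult_le_mono1)
    then show ?thesis
      using sum tt by (intro disjI1) linarith
  next
    case earlier_block
    then have "?N + ?T \<le> u * ?T"
      unfolding N using mult_le_mono1[OF earlier_block, of ?T] by (simp add: add_mult_distrib)
    moreover have "Y < 2 * ?Q" and "?d < ?Q" and "?Q \<le> ?T"
      using jidx_less[OF Q, of i] jidx_less[OF Q, of i'] jidx_less[OF Q, of 1] t
      by (simp_all add: Y_def)
    ultimately show ?thesis
      using sum two_Q by (intro disjI2) linarith
  next
    case previous_block
    have "j + j' + 1 < 2 * ?K"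
      using j j' by linarith
    moreover have "(i + i') * ?K + (j + j') = ?Q * ?K"
      using previous_block unfolding u_def .
    ultimately have "i + i' + 1 = ?Q \<or> i + i' = ?Q"
      by (rule mult_add_eq_multD)
    then have "Y + ?d \<le> 2 * ?Q"
      unfolding Y_def by (rule jidx_add_jidx_1_le[OF Q])
    moreover have "u * ?T = ?N"
      by (simp only: N previous_block)
    ultimately show ?thesis
      using sum two_Q by (intro disjI2) linarith
  qed
qed

lemma occ_starts_same_block_cong:
  assumes Q: "0 < qq k l n" and "i + i' + 1 = qq k l n"
  shows "[occ_start k l n j i t + occ_start k l n j' i' t' + qq k l n
    = jidx k l n 1 + qq k l (Suc n)] (mod qq k l n)"
proof -
  let ?Q = "qq k l n" and ?s = "occ_start k l n j i t" and ?s' = "occ_start k l n j' i' t'"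
  let ?Y = "jidx k l n i + jidx k l n i'"
  have "?s + ?s' + ?Q + ?Y = ((i + i') * k n + (j + j')) * (l n * ?Q) + (t + t' + 2) * ?Q + ?Q"
    using occ_start_sum[OF Q, of j i t j' i' t'] by linarith
  then have "[?s + ?s' + ?Q + ?Y = 0] (mod ?Q)"
    unfolding cong_0_iff by (simp only:) (intro dvd_add dvd_mult dvd_refl)
  moreover have "[jidx k l n 1 + qq k l (Suc n) + ?Y = 0] (mod ?Q)"
  proof -
    have "[qq k l (Suc n) = 0] (mod ?Q)"
      by (simp add: cong_0_iff qq_Suc_eq)
    from cong_add[OF jidx_add_jidx_1_cong_0[OF assms] this] show ?thesis
      by (simp add: ac_simps)
  qed
  ultimately have "[?s + ?s' + ?Q + ?Y = jidx k l n 1 + qq k l (Suc n) + ?Y] (mod ?Q)"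
    using cong_sym cong_trans by blast
  then show ?thesis
    by (simp only: cong_add_rcancel_nat)
qed

lemma occs_sum_trichotomy:
  assumes Q: "0 < qq k l n" and j: "j < k n" and j': "j' < k n"
    and s: "s \<in> occs k l n j" and s': "s' \<in> occs k l n j'"
  shows "s + s' + 2 * qq k l n \<le> jidx k l n 1 + qq k l (Suc n)
    \<or> jidx k l n 1 + qq k l (Suc n) \<le> s + s'
    \<or> j' = k n - j - 1 \<and> s + s' + qq k l n = jidx k l n 1 + qq k l (Suc n)"
proof -
  let ?Q = "qq k l n" and ?K = "k n" and ?d = "jidx k l n 1" and ?N = "qq k l (Suc n)"
  obtain i t where t: "t + 2 \<le> l n" and s_eq: "s = occ_start k l n j i t"
    using s by (rule occs_cases)
  obtain i' t' where t': "t' + 2 \<le> l n" and s'_eq: "s' = occ_start k l n j' i' t'"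
    using s' by (rule occs_cases)
  show ?thesis
  proof (cases "(i + i') * ?K + (j + j') + 1 = ?Q * ?K")
    case True
    moreover have "j + j' + 1 < 2 * ?K"
      using j j' by linarith
    ultimately have "i + i' + 1 = ?Q" and "j + j' + 1 = ?K"
      using mult_add_Suc_eq_multD by blast+
    then have "[s + s' + ?Q = ?d + ?N] (mod ?Q)" and "j' = ?K - j - 1"
      using occ_starts_same_block_cong[OF Q] unfolding s_eq s'_eq by auto
    then show ?thesis
      using cong_neq_imp_add_modulus_le by fastforce
  next
    case False
    then show ?thesis
      using occ_starts_separated[OF Q j j' t t'] unfolding s_eq s'_eq by blast
  qed
qed

lemma rev_occs_eq_image:
  "rev_occs k l n d j = (\<lambda>s. d + qq k l (Suc n) - s - qq k l n) ` occs k l n j"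
  unfolding rev_occs_def by blast

lemma rev_occs_shift:
  assumes "j < k n"
  shows "rev_occs k l n d (k n - j - 1) = (+) (j * (l n * qq k l n)) ` rev_occs k l n d (k n - 1)"
proof -
  let ?T = "l n * qq k l n"
  let ?refl = "\<lambda>s. d + qq k l (Suc n) - s - qq k l n"
  have "rev_occs k l n d (k n - j - 1) = (\<lambda>s. ?refl ((k n - j - 1) * ?T + s)) ` occs k l n 0"
    unfolding rev_occs_eq_image occs_shift[of k l n "k n - j - 1"] image_image by simp
  also have "\<dots> = (\<lambda>s. j * ?T + ?refl ((k n - 1) * ?T + s)) ` occs k l n 0"
  proof (rule image_cong[OF refl])
    fix s assume "s \<in> occs k l n 0"
    then have "(k n - 1) * ?T + s \<in> occs k l n (k n - 1)"
      using occs_shift[of k l n "k n - 1"] by blast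
    then have "(k n - 1) * ?T + s + qq k l n \<le> qq k l (Suc n)"
      using assms by (intro occ_end_le) auto
    moreover have "(k n - j - 1) * ?T + j * ?T = (k n - 1) * ?T"
      using assms by (simp flip: add_mult_distrib)
    ultimately show "?refl ((k n - j - 1) * ?T + s) = j * ?T + ?refl ((k n - 1) * ?T + s)"
      by linarith
  qed
  also have "\<dots> = (+) (j * ?T) ` rev_occs k l n d (k n - 1)"
    unfolding rev_occs_eq_image occs_shift[of k l n "k n - 1"] image_image by simp
  finally show ?thesis .
qed

lemma card_aligned_occs_eq:
  assumes "j < k n"
  shows "card {s \<in> occs k l n j. s \<in> rev_occs k l n d (k n - j - 1)}
    = card {s \<in> occs k l n 0. s \<in> rev_occs k l n d (k n - 1)}"
proof -
  have "{s \<in> occs k l n j. s \<in> rev_occs k l n d (k n - j - 1)}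
      = (+) (j * (l n * qq k l n)) ` {s \<in> occs k l n 0. s \<in> rev_occs k l n d (k n - 1)}"
    using rev_occs_shift[where k = k and n = n and l = l and d = d, OF assms] occs_shift[of k l n j]
    by auto
  then show ?thesis
    by (simp add: card_image)
qed

lemma unaligned_occ_opposite_boundary:
  assumes Q: "0 < qq k l n" and j: "j < k n" and s: "s \<in> occs k l n j"
    and unaligned: "s \<notin> rev_occs k l n (jidx k l n 1) (k n - j - 1)"
  shows "{s..<s + qq k l n} \<subseteq> rev_boundary k l n (jidx k l n 1)"
proof
  let ?Q = "qq k l n" and ?d = "jidx k l n 1" and ?N = "qq k l (Suc n)"
  fix x assume x: "x \<in> {s..<s + ?Q}"
  have "?d < ?Q"
    using jidx_less[OF Q] .
  moreover have "?Q \<le> s"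
    using Q j s by (rule qq_le_occ)
  moreover have "s + ?Q \<le> ?N"
    using j s by (rule occ_end_le)
  moreover have "\<not> (r \<le> x \<and> x < r + ?Q)" if j': "j' < k n" and r: "r \<in> rev_occs k l n ?d j'" for j' r
  proof -
    obtain s' where s': "s' \<in> occs k l n j'" and r_eq: "r = ?d + ?N - s' - ?Q"
      using r unfolding rev_occs_def by blast
    have s'_end: "s' + ?Q \<le> ?N"
      using j' s' by (rule occ_end_le)
    have "\<not> (j' = k n - j - 1 \<and> s + s' + ?Q = ?d + ?N)"
    proof
      assume "j' = k n - j - 1 \<and> s + s' + ?Q = ?d + ?N"
      moreover from this have "r = s"
        using r_eq s'_end by linarith
      ultimately show False
        using r unaligned by simp
    qed
    then have "s + s' + 2 * ?Q \<le> ?d + ?N \<or> ?d + ?N \<le> s + s'"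
      using occs_sum_trichotomy[OF Q j j' s s'] by blast
    then show ?thesis
      using x r_eq s'_end by auto
  qed
  ultimately show "x \<in> rev_boundary k l n ?d"
    using x unfolding rev_boundary_def by auto
qed

theorem mainTheorem8:
  fixes k l :: "nat \<Rightarrow> nat" and W0 :: "'a letter list set" and n :: nat
    and v v' :: "nat \<Rightarrow> 'a letter list" and w w' :: "'a letter list"
  assumes k2: "\<forall>m. k m \<ge> 2" and l2: "\<forall>m. l m \<ge> 2"
    and W0_len: "\<forall>x\<in>W0. length x = 1"
    and v: "\<forall>j<k n. v j \<in> Wc k l W0 n" and v': "\<forall>j<k n. v' j \<in> Wc k l W0 n"
    and w: "w = Cop k l n v" and w': "w' = Cop k l n v'"
  shows "(\<forall>i<k n. \<forall>s\<in>occs k l n i.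
            s \<in> rev_occs k l n (jidx k l n 1) (k n - i - 1)
          \<or> {s..<s + qq k l n} \<subseteq> rev_boundary k l n (jidx k l n 1))
       \<and> (\<exists>C. \<forall>i<k n.
            card {s \<in> occs k l n i. s \<in> rev_occs k l n (jidx k l n 1) (k n - i - 1)} = C)"
proof -
  \<comment> \<open>Only positions matter.\<close>
  have Q: "0 < qq k l n"
    using k2 l2 by (intro qq_pos) (auto intro: less_le_trans[of 0 2])
  show ?thesis
    using unaligned_occ_opposite_boundary[OF Q] card_aligned_occs_eq by blast
qed

end
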